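(* Let $\lambda\in\mathbb C$ with $\lambda\ne1$ and $\Re(\lambda)>0$, and let $Z$ be a complex random variable with $\mathbb E|Z|<\infty$, $\mathbb EZ\ne0$ and $Z\overset{\mathcal L}{=}e^{-\lambda T}(Z^{(1)}+\dots+Z^{(m)})$, where $Z^{(1)},\dots,Z^{(m)}$ are independent copies of $Z$ independent of $T$. Then for every $z\in\mathbb C$: if $z\in\mathrm{Supp}(Z)$ then the open disc $D(0,|z|)$ of centre $0$ and radius $|z|$ is contained in $\mathrm{Supp}(Z)$.
   Context: $m\ge2$ is an integer. $T=\tau_{(1)}+\dots+\tau_{(m-1)}$ where the $\tau_{(j)}$ are independent and $\tau_{(j)}$ is exponential with parameter $j$. $\mathrm{Supp}(Z)$ is the support of the law of $Z$: $z\in\mathrm{Supp}(Z)$ iff $\mathbb P(|Z-z|\le\varepsilon)>0$ for all $\varepsilon>0$. *)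

theory Defs
  imports "HOL-Probability.Probability"
begin

definition T_law :: "nat \<Rightarrow> real measure" where
  "T_law m = distr (PiM {1..<m} (\<lambda>j. density lborel (exponential_density (real j))))
                   borel (\<lambda>x. \<Sum>j\<in>{1..<m}. x j)"

definition supp_law :: "complex measure \<Rightarrow> complex set" where
  "supp_law \<mu> = {z. \<forall>\<epsilon>>0. measure \<mu> (cball z \<epsilon>) > 0}"

end

theory Submission
  imports Defs
begin

text \<open>Taking expectations in the fixed-point equation gives
  m E[e^{-\<lambda>T}] = m \<Prod>_{1\<le>j<m} j/(j+\<lambda>) = 1, which for real \<lambda> forces \<lambda> = 1; hence
  Im \<lambda> \<noteq> 0. Since T charges every neighbourhood of every t > 0, the support S of Z is
  mapped into itself by (s_1,...,s_m) \<mapsto> e^{-\<lambda>t}(s_1 + ... + s_m) for each t > 0. Letting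
  t \<rightarrow> \<infinity> gives 0 \<in> S, letting t \<rightarrow> 0 gives S + S \<subseteq> S, and for z \<in> S the spiral e^{-\<lambda>t}z
  lies in S. As Im \<lambda> \<noteq> 0, this spiral meets every ray from 0 arbitrarily close to 0, and
  integer multiples of these points approximate every point of the ray. So S = \<complex> as soon as
  S contains a nonzero point.\<close>

abbreviation exponential_law :: "real \<Rightarrow> real measure" where
  "exponential_law l \<equiv> density lborel (exponential_density l)"

lemma sigma_finite_exponential_law: "sigma_finite_measure (exponential_law l)"
  by (subst sigma_finite_measure.sigma_finite_iff_density_finite')
     (auto intro: lborel.sigma_finite_measure_axioms)

lemma product_sigma_finite_exponential_law: "product_sigma_finite (\<lambda>j. exponential_law (l j))"
  unfolding product_sigma_finite_def using sigma_finite_exponential_law by auto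

lemma emeasure_exponential_law_interval_pos:
  assumes l: "l > 0" and ab: "a < b" and b: "0 < b"
  shows "emeasure (exponential_law l) {a<..b} > 0"
proof -
  interpret prob_space "exponential_law l" using prob_space_exponential_density[OF l] .
  have "{a<..b} = {..b} - {..a}" by auto
  then have "emeasure (exponential_law l) {a<..b}
      = ennreal (erlang_CDF 0 l b) - ennreal (erlang_CDF 0 l a)"
    using ab l by (simp add: emeasure_Diff emeasure_erlang_density)
  also have "\<dots> = ennreal (erlang_CDF 0 l b - erlang_CDF 0 l a)"
    using l by (subst ennreal_minus) auto
  also have "\<dots> > 0"
    using l ab b by (auto simp: erlang_CDF_0 mult_pos_pos)
  finally show ?thesis .
qed

lemma exponential_law_laplace:
  assumes l: "l > 0" and s: "s \<ge> 0"
  shows "integrable (exponential_law l) (\<lambda>x. exp (- s * x))"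
    and "(\<integral>x. exp (- s * x) \<partial>exponential_law l) = l / (l + s)"
proof -
  have ls: "l + s > 0" using l s by simp
  interpret prob_space "exponential_law (l + s)" using prob_space_exponential_density[OF ls] .
  have nonneg: "AE x in lborel. 0 \<le> exponential_density r x" if "r > 0" for r
    using that by (simp add: exponential_density_nonneg)
  have tilt: "(\<lambda>x. exponential_density l x *\<^sub>R exp (- s * x))
      = (\<lambda>x. l / (l + s) * exponential_density (l + s) x)"
    using ls by (auto simp: exponential_density_def field_simps simp flip: exp_add)
  have "integrable (exponential_law (l + s)) (\<lambda>_. 1::real)" by simp
  then have "integrable lborel (exponential_density (l + s))"
    using nonneg[OF ls] by (subst (asm) integrable_density) auto
  then show "integrable (exponential_law l) (\<lambda>x. exp (- s * x))"
    using nonneg[OF l] tilt by (subst integrable_density) auto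
  have "(\<integral>_. 1 \<partial>exponential_law (l + s)) = (1::real)" using prob_space by simp
  then have "(\<integral>x. exponential_density (l + s) x \<partial>lborel) = 1"
    using nonneg[OF ls] by (subst (asm) integral_density) auto
  then show "(\<integral>x. exp (- s * x) \<partial>exponential_law l) = l / (l + s)"
    using nonneg[OF l] tilt by (subst integral_density) auto
qed

lemma prob_space_T_law: "prob_space (T_law m)"
  unfolding T_law_def
  by (rule prob_space.prob_space_distr) (auto intro!: prob_space_PiM prob_space_exponential_density)

lemma sets_T_law [measurable_cong]: "sets (T_law m) = sets borel"
  unfolding T_law_def by simp

text \<open>Each of the m - 1 exponential summands lands near t/(m - 1) with positive probability.\<close>
lemma emeasure_T_law_ball_pos:
  assumes m: "m \<ge> 2" and t: "t > 0" and \<delta>: "\<delta> > 0"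
  shows "emeasure (T_law m) (ball t \<delta>) > 0"
proof -
  define I where "I = {1..<m}"
  define k where "k = real (m - 1)"
  define a where "a = t / k - \<delta> / (2 * k)"
  define b where "b = t / k"
  interpret product_sigma_finite "\<lambda>j. exponential_law (real j)"
    by (rule product_sigma_finite_exponential_law)
  let ?P = "PiM I (\<lambda>j. exponential_law (real j))"
  let ?sum = "\<lambda>x. \<Sum>j\<in>I. x j"
  have cardI: "card I = m - 1" and fin: "finite I" unfolding I_def by simp_all
  have k: "k \<ge> 1" using m unfolding k_def by simp
  have ab: "a < b" "0 < b" using k t \<delta> unfolding a_def b_def by (auto simp: field_simps)
  have meas: "?sum \<in> borel_measurable ?P" by measurable
  have box: "PiE I (\<lambda>_. {a<..b}) \<subseteq> ?sum -` ball t \<delta> \<inter> space ?P"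
  proof
    fix x assume x: "x \<in> PiE I (\<lambda>_. {a<..b})"
    have "\<bar>?sum x - t\<bar> = \<bar>\<Sum>j\<in>I. (x j - b)\<bar>"
      using k unfolding b_def by (simp add: sum_subtractf cardI k_def)
    also have "\<dots> \<le> (\<Sum>j\<in>I. \<delta> / (2 * k))"
      using x by (intro order.trans[OF sum_abs] sum_mono) (auto simp: a_def b_def PiE_iff abs_le_iff)
    also have "\<dots> = \<delta> / 2" using m by (simp add: cardI k_def of_nat_diff field_simps)
    also have "\<dots> < \<delta>" using \<delta> by simp
    finally show "x \<in> ?sum -` ball t \<delta> \<inter> space ?P"
      using x by (auto simp: space_PiM dist_real_def abs_minus_commute)
  qed
  have "0 < (\<Prod>j\<in>I. emeasure (exponential_law (real j)) {a<..b})"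
    using ab emeasure_exponential_law_interval_pos fin
    by (auto simp: I_def zero_less_iff_neq_zero prod_zero_iff)
  also have "\<dots> = emeasure ?P (PiE I (\<lambda>_. {a<..b}))"
    by (rule emeasure_PiM[OF fin, symmetric]) simp
  also have "\<dots> \<le> emeasure ?P (?sum -` ball t \<delta> \<inter> space ?P)"
    by (rule emeasure_mono[OF box]) (use meas in measurable)
  also have "\<dots> = emeasure (T_law m) (ball t \<delta>)"
    unfolding T_law_def I_def[symmetric] by (rule emeasure_distr[OF meas, symmetric]) simp
  finally show ?thesis .
qed

lemma T_law_laplace:
  assumes l: "l \<ge> 0"
  shows "(\<integral>t. exp (- l * t) \<partial>T_law m) = (\<Prod>j\<in>{1..<m}. real j / (real j + l))"
proof -
  interpret product_sigma_finite "\<lambda>j. exponential_law (real j)"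
    by (rule product_sigma_finite_exponential_law)
  have "(\<integral>t. exp (- l * t) \<partial>T_law m)
      = (\<integral>x. exp (- l * (\<Sum>j\<in>{1..<m}. x j)) \<partial>PiM {1..<m} (\<lambda>j. exponential_law (real j)))"
    unfolding T_law_def by (rule integral_distr) measurable
  also have "\<dots> = (\<integral>x. (\<Prod>j\<in>{1..<m}. exp (- l * x j)) \<partial>PiM {1..<m} (\<lambda>j. exponential_law (real j)))"
    by (simp add: sum_distrib_left exp_sum)
  also have "\<dots> = (\<Prod>j\<in>{1..<m}. \<integral>x. exp (- l * x) \<partial>exponential_law (real j))"
    by (rule product_integral_prod) (use exponential_law_laplace(1) l in auto)
  also have "\<dots> = (\<Prod>j\<in>{1..<m}. real j / (real j + l))"
    by (rule prod.cong) (use exponential_law_laplace(2) l in auto)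
  finally show ?thesis .
qed

lemma prod_succ_div_eq: "n \<ge> 1 \<Longrightarrow> (\<Prod>j\<in>{1..<n}. (real j + 1) / real j) = real n"
  by (induction n rule: dec_induct) (auto simp: prod.atLeastLessThan_Suc)

text \<open>After telescoping, all factors of the product lie on the same side of 1.\<close>
lemma prod_ratio_times_neq_1:
  assumes n: "n \<ge> 2" and l: "l > 0" "l \<noteq> 1"
  shows "(\<Prod>j\<in>{1..<n}. real j / (real j + l)) * real n \<noteq> 1"
proof -
  have "(\<Prod>j\<in>{1..<n}. real j / (real j + l)) * real n
      = (\<Prod>j\<in>{1..<n}. real j / (real j + l)) * (\<Prod>j\<in>{1..<n}. (real j + 1) / real j)"
    by (subst prod_succ_div_eq) (use n in auto)
  also have "\<dots> = (\<Prod>j\<in>{1..<n}. (real j + 1) / (real j + l))"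
    by (subst prod.distrib[symmetric], rule prod.cong) auto
  finally have eq: "(\<Prod>j\<in>{1..<n}. real j / (real j + l)) * real n
      = (\<Prod>j\<in>{1..<n}. (real j + 1) / (real j + l))" .
  have one: "1 \<in> {1..<n}" using n by simp
  show ?thesis
  proof (cases "l > 1")
    case True
    have "(\<Prod>j\<in>{1..<n}. (real j + 1) / (real j + l)) < (\<Prod>j\<in>{1..<n}. 1)"
      by (rule prod_mono_strict[OF one]) (use True in auto)
    then show ?thesis using eq by simp
  next
    case False
    then have "l < 1" using l by simp
    have "(\<Prod>j\<in>{1..<n}. 1) < (\<Prod>j\<in>{1..<n}. (real j + 1) / (real j + l))"
      by (rule prod_mono_strict[OF one]) (use \<open>l < 1\<close> l in auto)
    then show ?thesis using eq by simp
  qed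
qed

lemma closed_supp_law:
  assumes "finite_measure M" "sets M = sets borel"
  shows "closed (supp_law M)"
  unfolding closure_subset_eq[symmetric]
proof
  interpret finite_measure M by fact
  fix x assume "x \<in> closure (supp_law M)"
  then have approx: "\<forall>e>0. \<exists>y\<in>supp_law M. dist y x < e"
    by (simp add: closure_approachable)
  show "x \<in> supp_law M" unfolding supp_law_def
  proof (intro CollectI allI impI)
    fix e :: real assume e: "e > 0"
    obtain y where y: "y \<in> supp_law M" "dist y x < e / 2"
      using approx e by (meson half_gt_zero)
    have "0 < measure M (cball y (e / 2))" using y e unfolding supp_law_def by auto
    also have "\<dots> \<le> measure M (cball x e)"
    proof (rule finite_measure_mono)
      show "cball y (e / 2) \<subseteq> cball x e"
        using y by (auto simp: cball_def) (smt (verit) dist_commute dist_triangle)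
      show "cball x e \<in> sets M" using assms(2) by simp
    qed
    finally show "measure M (cball x e) > 0" .
  qed
qed

lemma in_supp_law_distrI:
  assumes M: "finite_measure M" and F: "F \<in> borel_measurable M"
    and witness: "\<And>e. e > 0 \<Longrightarrow> \<exists>B\<in>sets M. B \<subseteq> F -` cball x e \<and> emeasure M B > 0"
  shows "x \<in> supp_law (distr M borel F)"
  unfolding supp_law_def
proof (intro CollectI allI impI)
  interpret finite_measure M by fact
  interpret D: finite_measure "distr M borel F" by (rule finite_measure_distr[OF F])
  fix e :: real assume "e > 0"
  then obtain B where B: "B \<in> sets M" "B \<subseteq> F -` cball x e" "emeasure M B > 0"
    using witness by blast
  note \<open>emeasure M B > 0\<close>
  also have "emeasure M B \<le> emeasure M (F -` cball x e \<inter> space M)"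
    using B sets.sets_into_space by (intro emeasure_mono) (auto intro: measurable_sets[OF F])
  also have "\<dots> = emeasure (distr M borel F) (cball x e)"
    by (rule emeasure_distr[OF F, symmetric]) simp
  finally show "measure (distr M borel F) (cball x e) > 0"
    by (simp add: D.emeasure_eq_measure)
qed

lemma continuous_scaled_sum_estimate:
  fixes g :: "real \<Rightarrow> complex" and s :: "nat \<Rightarrow> complex"
  assumes g: "continuous (at t) g" and e: "e > 0"
  obtains d r where "d > 0" "r > 0"
    "\<And>t' zs. dist t' t < d \<Longrightarrow> (\<forall>i<m. dist (zs i) (s i) \<le> r)
       \<Longrightarrow> dist (g t' * (\<Sum>i<m. zs i)) (g t * (\<Sum>i<m. s i)) \<le> e"
proof -
  define c where "c = (\<Sum>i<m. s i)"
  define K where "K = cmod (g t) + 1"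
  define \<epsilon> where "\<epsilon> = e / (2 * (cmod c + 1))"
  define r where "r = e / (2 * K) / (real m + 1)"
  have K: "K \<ge> 1" unfolding K_def by simp
  have c1: "cmod c + 1 > 0" by (smt (verit) norm_ge_zero)
  have \<epsilon>: "\<epsilon> > 0" using e c1 by (simp add: \<epsilon>_def)
  have "\<epsilon> * cmod c \<le> \<epsilon> * (cmod c + 1)" using \<epsilon> by simp
  also have "\<dots> = e / 2" using c1 by (simp add: \<epsilon>_def field_simps)
  finally have \<epsilon>_c: "\<epsilon> * cmod c \<le> e / 2" .
  have r: "r > 0" using e K by (simp add: r_def)
  have "K * (real m * r) \<le> K * ((real m + 1) * r)"
    using K r by (intro mult_left_mono mult_right_mono) auto
  also have "\<dots> = e / 2" using K by (simp add: r_def)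
  finally have r_K: "K * (real m * r) \<le> e / 2" .
  obtain d where d: "d > 0" "\<And>t'. dist t' t < d \<Longrightarrow> dist (g t') (g t) < min 1 \<epsilon>"
    using g \<epsilon> unfolding continuous_at_eps_delta by (metis min_less_iff_conj zero_less_one)
  have "dist (g t' * (\<Sum>i<m. zs i)) (g t * c) \<le> e"
    if t': "dist t' t < d" and zs: "\<forall>i<m. dist (zs i) (s i) \<le> r" for t' zs
  proof -
    have gt': "cmod (g t') \<le> K"
      using d(2)[OF t'] norm_triangle_ineq2[of "g t'" "g t"] unfolding K_def dist_norm by simp
    have "cmod ((\<Sum>i<m. zs i) - c) \<le> (\<Sum>i<m. cmod (zs i - s i))"
      unfolding c_def sum_subtractf[symmetric] by (rule norm_sum)
    also have "\<dots> \<le> real m * r"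
      using zs sum_mono[of "{..<m}" "\<lambda>i. cmod (zs i - s i)" "\<lambda>_. r"] by (simp add: dist_norm)
    finally have sum_close: "cmod ((\<Sum>i<m. zs i) - c) \<le> real m * r" .
    have "g t' * (\<Sum>i<m. zs i) - g t * c = g t' * ((\<Sum>i<m. zs i) - c) + (g t' - g t) * c"
      by (simp add: algebra_simps)
    then have "cmod (g t' * (\<Sum>i<m. zs i) - g t * c)
        \<le> cmod (g t') * cmod ((\<Sum>i<m. zs i) - c) + cmod (g t' - g t) * cmod c"
      by (metis norm_mult norm_triangle_ineq)
    also have "\<dots> \<le> K * (real m * r) + \<epsilon> * cmod c"
      using d(2)[OF t'] gt' sum_close K \<epsilon>
      by (intro add_mono mult_mono) (auto simp: dist_norm)
    also have "\<dots> \<le> e" using r_K \<epsilon>_c by simp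
    finally show ?thesis by (simp add: dist_norm)
  qed
  then show ?thesis using that[OF d(1) r] unfolding c_def by blast
qed

lemma cis_eq_at_large_arg:
  assumes b: "b \<noteq> 0" and u: "cmod u = 1"
  obtains t where "t > T" "cis (b * t) = u"
proof -
  obtain N :: nat where N: "(\<bar>T * b\<bar> + \<bar>Arg u\<bar>) / (2 * pi) < real N"
    using reals_Archimedean2 by blast
  define k :: real where "k = (if b > 0 then real N else - real N)"
  define t where "t = (Arg u + 2 * pi * k) / b"
  have large: "\<bar>T * b\<bar> + \<bar>Arg u\<bar> < 2 * pi * real N"
    using N by (simp add: field_simps)
  have "T < t"
  proof (cases "b > 0")
    case True
    then show ?thesis using large unfolding t_def k_def by (simp add: field_simps abs_if split: if_splits)
  next
    case False
    then have "b < 0" using b by simp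
    then show ?thesis using large unfolding t_def k_def by (simp add: field_simps abs_if split: if_splits)
  qed
  moreover have "cis (b * t) = u"
  proof -
    have "k \<in> \<int>" unfolding k_def by auto
    then have "cis (b * t) = cis (Arg u) * cis (2 * pi * k)"
      using b by (simp add: t_def flip: cis_mult)
    also have "\<dots> = u"
    proof -
      have "u \<noteq> 0" using u by auto
      then show ?thesis using \<open>k \<in> \<int>\<close> u cis_Arg[of u] by (simp add: sgn_eq)
    qed
    finally show ?thesis .
  qed
  ultimately show ?thesis using that by blast
qed

lemma closed_add_closed_contains_ray:
  fixes S :: "'a::real_normed_vector set"
  assumes closed: "closed S" and zero: "0 \<in> S" and add: "\<And>x y. x \<in> S \<Longrightarrow> y \<in> S \<Longrightarrow> x + y \<in> S"
    and small: "\<And>e. e > 0 \<Longrightarrow> \<exists>r. 0 < r \<and> r < e \<and> r *\<^sub>R u \<in> S"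
    and a: "a \<ge> 0"
  shows "a *\<^sub>R u \<in> S"
proof -
  have multiple: "real n *\<^sub>R p \<in> S" if "p \<in> S" for n p
    by (induction n) (use zero that add in \<open>auto simp: scaleR_add_left\<close>)
  have "a *\<^sub>R u \<in> closure S"
    unfolding closure_approachable
  proof (intro allI impI)
    fix e :: real assume e: "e > 0"
    then obtain r where r: "0 < r" "r < e / (norm u + 1)" "r *\<^sub>R u \<in> S"
      using small[of "e / (norm u + 1)"] by (smt (verit) divide_pos_pos norm_ge_zero)
    define n where "n = nat \<lfloor>a / r\<rfloor>"
    have "real n = of_int \<lfloor>a / r\<rfloor>"
      using a r(1) unfolding n_def by simp
    then have "real n \<le> a / r" "a / r < real n + 1" by linarith+
    then have close: "\<bar>a - real n * r\<bar> < r"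
      using r(1) by (simp add: field_simps)
    have "dist (real n *\<^sub>R (r *\<^sub>R u)) (a *\<^sub>R u) = \<bar>a - real n * r\<bar> * norm u"
      by (simp add: dist_norm scaleR_diff_left[symmetric] abs_minus_commute)
    also have "\<dots> \<le> r * norm u"
      using close by (intro mult_right_mono) auto
    also have "\<dots> < e"
    proof -
      have "r * norm u \<le> r * (norm u + 1)" using r(1) by simp
      also have "\<dots> < e"
        using r(2) pos_less_divide_eq[of "norm u + 1" r e] by (smt (verit) norm_ge_zero)
      finally show ?thesis .
    qed
    finally show "\<exists>y\<in>S. dist y (a *\<^sub>R u) < e"
      using multiple[OF r(3)] by blast
  qed
  then show ?thesis using closed by (simp add: closure_closed)
qed

lemma closed_add_closed_spiral_eq_UNIV:
  fixes S :: "complex set" and lam z :: complex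
  assumes closed: "closed S" and zero: "0 \<in> S" and add: "\<And>x y. x \<in> S \<Longrightarrow> y \<in> S \<Longrightarrow> x + y \<in> S"
    and spiral: "\<And>t. t > 0 \<Longrightarrow> exp (- lam * complex_of_real t) * z \<in> S"
    and Re: "Re lam > 0" and Im: "Im lam \<noteq> 0" and z: "z \<noteq> 0"
  shows "S = UNIV"
proof -
  have "w \<in> S" for w
  proof (cases "w = 0")
    case True
    then show ?thesis using zero by simp
  next
    case False
    have "cmod w *\<^sub>R sgn w \<in> S"
    proof (rule closed_add_closed_contains_ray[OF closed zero])
      show "x + y \<in> S" if "x \<in> S" "y \<in> S" for x y
        using add that .
      fix e :: real assume e: "e > 0"
      have unit: "cmod (sgn w / sgn z) = 1" using False z by (simp add: norm_divide norm_sgn)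
      obtain t where t: "t > max 0 (ln (cmod z / e) / Re lam)"
        and dir: "cis (- Im lam * t) = sgn w / sgn z"
        by (rule cis_eq_at_large_arg[of "- Im lam" "sgn w / sgn z" "max 0 (ln (cmod z / e) / Re lam)"]) (use Im unit in auto)
      define r where "r = exp (- Re lam * t) * cmod z"
      have "ln (cmod z / e) < Re lam * t" using t Re by (simp add: field_simps)
      then have "cmod z / e < exp (Re lam * t)"
        using z e by (metis divide_pos_pos exp_less_mono exp_ln zero_less_norm_iff)
      then have "r < e" using e by (simp add: r_def exp_minus field_simps)
      moreover have "r *\<^sub>R sgn w = exp (- lam * complex_of_real t) * z"
      proof -
        have "exp (- lam * complex_of_real t) = exp (- Re lam * t) * cis (- Im lam * t)"
          by (simp add: exp_eq_polar)
        then show ?thesis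
          using z dir by (simp add: r_def scaleR_conv_of_real sgn_eq field_simps)
      qed
      moreover have "r > 0" using z by (simp add: r_def)
      ultimately show "\<exists>r. 0 < r \<and> r < e \<and> r *\<^sub>R sgn w \<in> S"
        using spiral[of t] t by (intro exI[of _ r]) auto
    qed simp
    then show ?thesis by (simp add: scaleR_conv_of_real sgn_eq False)
  qed
  then show ?thesis by auto
qed

lemma tendsto_exp_neg_mult_at_top:
  assumes Re: "Re lam > 0"
  shows "((\<lambda>t. exp (- lam * complex_of_real t)) \<longlongrightarrow> 0) at_top"
proof (rule tendsto_norm_zero_cancel)
  have "filterlim (\<lambda>t. - Re lam * t) at_bot at_top"
    by (rule filterlim_tendsto_neg_mult_at_bot[OF tendsto_const]) (use Re in \<open>auto simp: filterlim_ident\<close>)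
  then have "((\<lambda>t. exp (- Re lam * t)) \<longlongrightarrow> 0) at_top"
    by (rule filterlim_compose[OF exp_at_bot])
  then show "((\<lambda>t. norm (exp (- lam * complex_of_real t))) \<longlongrightarrow> 0) at_top"
    by simp
qed

locale smoothing_fixpoint =
  fixes m :: nat and lam :: complex and \<mu> :: "complex measure"
  assumes m_ge_2: "m \<ge> 2"
    and prob_space_\<mu>: "prob_space \<mu>" and sets_\<mu>: "sets \<mu> = sets borel"
    and fixpoint: "\<mu> = distr (T_law m \<Otimes>\<^sub>M PiM {..<m} (\<lambda>_. \<mu>)) borel
                     (\<lambda>(t, zs). exp (- lam * complex_of_real t) * (\<Sum>i<m. zs i))"
begin

abbreviation copies :: "(nat \<Rightarrow> complex) measure" where
  "copies \<equiv> PiM {..<m} (\<lambda>_. \<mu>)"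

abbreviation smoothing :: "real \<times> (nat \<Rightarrow> complex) \<Rightarrow> complex" where
  "smoothing \<equiv> \<lambda>(t, zs). exp (- lam * complex_of_real t) * (\<Sum>i<m. zs i)"

sublocale prob_space \<mu> by (rule prob_space_\<mu>)

lemma product_sigma_finite_copies: "product_sigma_finite (\<lambda>_::nat. \<mu>)"
  unfolding product_sigma_finite_def using sigma_finite_measure_axioms by simp

lemma prob_space_copies: "prob_space copies"
  by (rule prob_space_PiM) (use prob_space_\<mu> in auto)

lemma prob_space_product: "prob_space (T_law m \<Otimes>\<^sub>M copies)"
  by (intro prob_space_pair prob_space_T_law prob_space_copies)

lemma measurable_smoothing: "smoothing \<in> borel_measurable (T_law m \<Otimes>\<^sub>M copies)"
  using sets_\<mu>[measurable_cong] by measurable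

lemma emeasure_box_pos:
  assumes t: "t > 0" and d: "d > 0" and r: "r > 0" and s: "\<forall>i<m. s i \<in> supp_law \<mu>"
  shows "emeasure (T_law m \<Otimes>\<^sub>M copies) (ball t d \<times> PiE {..<m} (\<lambda>i. cball (s i) r)) > 0"
proof -
  interpret product_sigma_finite "\<lambda>_::nat. \<mu>" by (rule product_sigma_finite_copies)
  interpret copies: prob_space copies by (rule prob_space_copies)
  interpret T: prob_space "T_law m" by (rule prob_space_T_law)
  have "\<forall>i<m. emeasure \<mu> (cball (s i) r) \<noteq> 0"
    using s r unfolding supp_law_def by (auto simp: emeasure_eq_measure) (metis less_irrefl)
  then have "0 < emeasure (T_law m) (ball t d) * (\<Prod>i<m. emeasure \<mu> (cball (s i) r))"
    using emeasure_T_law_ball_pos[OF m_ge_2 t d]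
    by (simp add: zero_less_iff_neq_zero prod_zero_iff)
  also have "\<dots> = emeasure (T_law m) (ball t d) * emeasure copies (PiE {..<m} (\<lambda>i. cball (s i) r))"
    by (subst emeasure_PiM) (auto simp: sets_\<mu>)
  also have "\<dots> = emeasure (T_law m \<Otimes>\<^sub>M copies) (ball t d \<times> PiE {..<m} (\<lambda>i. cball (s i) r))"
    by (rule copies.emeasure_pair_measure_Times[symmetric]) (auto simp: sets_\<mu> intro!: sets_PiM_I_finite)
  finally show ?thesis .
qed

lemma smoothing_in_supp_law:
  assumes t: "t > 0" and s: "\<forall>i<m. s i \<in> supp_law \<mu>"
  shows "exp (- lam * complex_of_real t) * (\<Sum>i<m. s i) \<in> supp_law \<mu>"
proof -
  interpret product: prob_space "T_law m \<Otimes>\<^sub>M copies" by (rule prob_space_product)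
  have "smoothing (t, s) \<in> supp_law (distr (T_law m \<Otimes>\<^sub>M copies) borel smoothing)"
  proof (rule in_supp_law_distrI[OF product.finite_measure_axioms measurable_smoothing])
    fix e :: real assume e: "e > 0"
    have "continuous (at t) (\<lambda>t. exp (- lam * complex_of_real t))"
      by (intro continuous_intros)
    then obtain d r where d: "d > 0" and r: "r > 0" and close:
      "\<And>t' zs. dist t' t < d \<Longrightarrow> (\<forall>i<m. dist (zs i) (s i) \<le> r)
         \<Longrightarrow> dist (exp (- lam * complex_of_real t') * (\<Sum>i<m. zs i)) (smoothing (t, s)) \<le> e"
      using continuous_scaled_sum_estimate[OF _ e] by (metis case_prod_conv)
    define B where "B = ball t (min d t) \<times> PiE {..<m} (\<lambda>i. cball (s i) r)"
    have "B \<in> sets (T_law m \<Otimes>\<^sub>M copies)"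
      unfolding B_def by (auto simp: sets_\<mu> intro!: sets_PiM_I_finite)
    moreover have "B \<subseteq> smoothing -` cball (smoothing (t, s)) e"
      using close by (fastforce simp: B_def dist_commute PiE_iff)
    moreover have "emeasure (T_law m \<Otimes>\<^sub>M copies) B > 0"
      unfolding B_def using t d r s by (intro emeasure_box_pos) auto
    ultimately show "\<exists>B\<in>sets (T_law m \<Otimes>\<^sub>M copies).
        B \<subseteq> smoothing -` cball (smoothing (t, s)) e \<and> emeasure (T_law m \<Otimes>\<^sub>M copies) B > 0"
      by blast
  qed
  then show ?thesis by (subst fixpoint) simp
qed

lemma mean_fixpoint_equation:
  assumes integ: "integrable \<mu> (\<lambda>x. x)" and mean: "(\<integral>x. x \<partial>\<mu>) \<noteq> 0"
  shows "(\<integral>t. exp (- lam * complex_of_real t) \<partial>T_law m) * of_nat m = 1"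
proof -
  interpret product_sigma_finite "\<lambda>_::nat. \<mu>" by (rule product_sigma_finite_copies)
  interpret copies: prob_space copies by (rule prob_space_copies)
  interpret T: prob_space "T_law m" by (rule prob_space_T_law)
  interpret pair_sigma_finite "T_law m" copies ..
  define EZ where "EZ = (\<integral>x. x \<partial>\<mu>)"
  have coordinate: "integrable copies (\<lambda>zs. zs i) \<and> (\<integral>zs. zs i \<partial>copies) = EZ" if i: "i < m" for i
  proof -
    have meas: "(\<lambda>zs. zs i) \<in> copies \<rightarrow>\<^sub>M \<mu>"
      using i by (intro measurable_component_singleton) simp
    have component: "distr copies \<mu> (\<lambda>zs. zs i) = \<mu>"
      using i by (intro distr_PiM_component) (auto intro: prob_space_\<mu>)
    have "integrable (distr copies \<mu> (\<lambda>zs. zs i)) (\<lambda>x. x)"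
      using integ by (simp add: component)
    then have "integrable copies (\<lambda>zs. zs i)"
      by (subst (asm) integrable_distr_eq[OF meas measurable_ident_sets[OF sets_\<mu>]])
    moreover have "(\<integral>zs. zs i \<partial>copies) = (\<integral>x. x \<partial>distr copies \<mu> (\<lambda>zs. zs i))"
      by (rule integral_distr[OF meas measurable_ident_sets[OF sets_\<mu>], symmetric])
    ultimately show ?thesis by (simp add: component EZ_def)
  qed
  then have sum_mean: "(\<integral>zs. (\<Sum>i<m. zs i) \<partial>copies) = of_nat m * EZ"
    using coordinate by (subst Bochner_Integration.integral_sum) auto
  have "integrable (distr (T_law m \<Otimes>\<^sub>M copies) borel smoothing) (\<lambda>x. x)"
    using integ by (subst (asm) fixpoint)
  then have integ_smoothing: "integrable (T_law m \<Otimes>\<^sub>M copies) smoothing"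
    by (subst (asm) integrable_distr_eq[OF measurable_smoothing]) auto
  have "EZ = (\<integral>x. x \<partial>distr (T_law m \<Otimes>\<^sub>M copies) borel smoothing)"
    unfolding EZ_def by (rule arg_cong[OF fixpoint])
  also have "\<dots> = (\<integral>x. smoothing x \<partial>(T_law m \<Otimes>\<^sub>M copies))"
    by (rule integral_distr[OF measurable_smoothing]) simp
  also have "\<dots> = (\<integral>t. (\<integral>zs. exp (- lam * complex_of_real t) * (\<Sum>i<m. zs i) \<partial>copies) \<partial>T_law m)"
    using integral_fst[of "\<lambda>t zs. exp (- lam * complex_of_real t) * (\<Sum>i<m. zs i)"] integ_smoothing
    by simp
  also have "\<dots> = (\<integral>t. exp (- lam * complex_of_real t) \<partial>T_law m) * of_nat m * EZ"
    by (simp add: sum_mean mult.assoc)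
  finally show ?thesis using mean unfolding EZ_def by simp
qed

lemma Im_neq_0:
  assumes lam1: "lam \<noteq> 1" and Re: "Re lam > 0"
    and integ: "integrable \<mu> (\<lambda>x. x)" and mean: "(\<integral>x. x \<partial>\<mu>) \<noteq> 0"
  shows "Im lam \<noteq> 0"
proof
  assume "Im lam = 0"
  then have lam: "lam = complex_of_real (Re lam)" by (simp add: complex_eq_iff)
  have "(\<integral>t. exp (- lam * complex_of_real t) \<partial>T_law m)
      = complex_of_real (\<integral>t. exp (- Re lam * t) \<partial>T_law m)"
  proof -
    have "(\<lambda>t. exp (- lam * complex_of_real t)) = (\<lambda>t. complex_of_real (exp (- Re lam * t)))"
      by (subst lam) (simp flip: exp_of_real)
    then show ?thesis by simp
  qed
  then have "complex_of_real ((\<Prod>j\<in>{1..<m}. real j / (real j + Re lam)) * real m) = 1"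
    using mean_fixpoint_equation[OF integ mean] T_law_laplace[of "Re lam" m] Re by simp
  then have "(\<Prod>j\<in>{1..<m}. real j / (real j + Re lam)) * real m = 1"
    by (simp only: of_real_eq_1_iff)
  moreover have "Re lam \<noteq> 1" using lam lam1 by auto
  ultimately show False using prod_ratio_times_neq_1[OF m_ge_2 Re] by simp
qed

lemma closed_supp_law_\<mu>: "closed (supp_law \<mu>)"
  by (rule closed_supp_law[OF finite_measure_axioms sets_\<mu>])

lemma zero_in_supp_law:
  assumes Re: "Re lam > 0" and z: "z \<in> supp_law \<mu>"
  shows "0 \<in> supp_law \<mu>"
proof (rule Lim_in_closed_set[OF closed_supp_law_\<mu>])
  have "exp (- lam * complex_of_real t) * (\<Sum>i<m. z) \<in> supp_law \<mu>" if "t > 0" for t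
    using z by (intro smoothing_in_supp_law that) auto
  then show "\<forall>\<^sub>F t in at_top. exp (- lam * complex_of_real t) * (\<Sum>i<m. z) \<in> supp_law \<mu>"
    by (rule eventually_mono[OF eventually_gt_at_top[of 0]])
  show "((\<lambda>t. exp (- lam * complex_of_real t) * (\<Sum>i<m. z)) \<longlongrightarrow> 0) at_top"
    by (rule tendsto_mult_left_zero[OF tendsto_exp_neg_mult_at_top[OF Re]])
qed simp

lemma supp_law_add:
  assumes zero: "0 \<in> supp_law \<mu>" and x: "x \<in> supp_law \<mu>" and y: "y \<in> supp_law \<mu>"
  shows "x + y \<in> supp_law \<mu>"
proof (rule Lim_in_closed_set[OF closed_supp_law_\<mu>])
  define s where "s = (\<lambda>i::nat. (if i = 0 then x else 0) + (if i = 1 then y else 0))"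
  have s_supp: "\<forall>i<m. s i \<in> supp_law \<mu>" using x y zero by (simp add: s_def)
  have s_sum: "(\<Sum>i<m. s i) = x + y"
    using m_ge_2 by (simp add: s_def sum.distrib)
  have "exp (- lam * complex_of_real t) * (x + y) \<in> supp_law \<mu>" if "t > 0" for t
    using smoothing_in_supp_law[OF that s_supp] by (simp only: s_sum)
  then show "\<forall>\<^sub>F t in at_right 0. exp (- lam * complex_of_real t) * (x + y) \<in> supp_law \<mu>"
    by (rule eventually_mono[OF eventually_at_right_less])
  have "((\<lambda>t. exp (- lam * complex_of_real t) * (x + y))
      \<longlongrightarrow> exp (- lam * complex_of_real 0) * (x + y)) (at_right 0)"
    by (intro tendsto_intros)
  then show "((\<lambda>t. exp (- lam * complex_of_real t) * (x + y)) \<longlongrightarrow> x + y) (at_right 0)"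
    by simp
qed simp

lemma supp_law_eq_UNIV:
  assumes Re: "Re lam > 0" and Im: "Im lam \<noteq> 0" and z: "z \<in> supp_law \<mu>" "z \<noteq> 0"
  shows "supp_law \<mu> = UNIV"
proof (rule closed_add_closed_spiral_eq_UNIV[OF closed_supp_law_\<mu> _ _ _ Re Im z(2)])
  show zero: "0 \<in> supp_law \<mu>" by (rule zero_in_supp_law[OF Re z(1)])
  show "x + y \<in> supp_law \<mu>" if "x \<in> supp_law \<mu>" "y \<in> supp_law \<mu>" for x y
    using supp_law_add[OF zero] that .
  show "exp (- lam * complex_of_real t) * z \<in> supp_law \<mu>" if "t > 0" for t
    using smoothing_in_supp_law[OF that, of "\<lambda>i. if i = 0 then z else 0"] zero z m_ge_2 by simp
qed

end

theorem lemma7p1: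
  fixes m :: nat and lam :: complex and \<mu> :: "complex measure" and z :: complex
  assumes m: "m \<ge> 2"
    and lam1: "lam \<noteq> 1" and lampos: "Re lam > 0"
    and prob: "prob_space \<mu>" and sets: "sets \<mu> = sets borel"
    and integ: "integrable \<mu> (\<lambda>x. x)"
    and mean: "(\<integral>x. x \<partial>\<mu>) \<noteq> 0"
    and fixpt: "\<mu> = distr (T_law m \<Otimes>\<^sub>M PiM {..<m} (\<lambda>_. \<mu>)) borel
                     (\<lambda>(t, zs). exp (- lam * complex_of_real t) * (\<Sum>i<m. zs i))"
    and zs: "z \<in> supp_law \<mu>"
  shows "ball 0 (cmod z) \<subseteq> supp_law \<mu>"
proof (cases "z = 0")
  case True
  then show ?thesis by simp
next
  case False
  interpret smoothing_fixpoint m lam \<mu>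
    by (rule smoothing_fixpoint.intro[OF m prob sets fixpt])
  have "Im lam \<noteq> 0" by (rule Im_neq_0[OF lam1 lampos integ mean])
  then show ?thesis using supp_law_eq_UNIV[OF lampos _ zs False] by simp
qed

end
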